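(* Fix $i\in\{1,\dots,N\}$, $\phi>0$ and $\boldsymbol{\theta}\in\mathbb{R}^m$, and assume that the map $(t,\boldsymbol{\theta}')\mapsto g(t,\mathbf{x}_i;\boldsymbol{\theta}')$ is continuous on $[0,y_i]\times\mathbb{R}^m$. Let $\omega_i\sim\mathrm{PG}(1,0)$ and, independently, let $\Psi_i$ be a marked Poisson process on $[0,y_i]\times\mathbb{R}_+$ with intensity $\lambda_i(t,\omega;\phi)=\lambda_0(t,\mathbf{x}_i;\phi)\,p_{\mathrm{PG}}(\omega\mid 1,0)$; denote its law by $\mathbb{P}_{\Psi_i\mid\phi}$. Then $$p(y_i,\delta_i\mid \mathbf{x}_i,\phi,g(\cdot;\boldsymbol{\theta}))=\mathbb{E}_{\omega_i\sim \mathrm{PG}(1,0),\,\Psi_i\sim\mathbb{P}_{\Psi_i\mid\phi}}\big[p(y_i,\delta_i\mid \mathbf{x}_i,\phi,g(\cdot;\boldsymbol{\theta}),\omega_i,\Psi_i)\big],$$ where the likelihood is $$p(y_i,\delta_i\mid \mathbf{x}_i,\phi,g(\cdot;\boldsymbol{\theta}))=\big(\lambda_0(y_i,\mathbf{x}_i;\phi)\,\sigma(g(y_i,\mathbf{x}_i;\boldsymbol{\theta}))\big)^{\delta_i}\exp\Big(-\int_0^{y_i}\lambda_0(t,\mathbf{x}_i;\phi)\,\sigma(g(t,\mathbf{x}_i;\boldsymbol{\theta}))\,dt\Big)$$ and the augmented likelihood is $$p(y_i,\delta_i\mid \mathbf{x}_i,\phi,g(\cdot;\boldsymbol{\theta}),\omega_i,\Psi_i)=\big(\lambda_0(y_i,\mathbf{x}_i;\phi)\,e^{f(\omega_i,g(y_i,\mathbf{x}_i;\boldsymbol{\theta}))}\big)^{\delta_i}\prod_{(t_j,\omega_j)\in\Psi_i}e^{f(\omega_j,-g(t_j,\mathbf{x}_i;\boldsymbol{\theta}))},$$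 with the empty product equal to $1$.
   Context: Data: $N$ observations with observed times $y_i>0$, censoring indicators $\delta_i\in\{0,1\}$ and covariates $\mathbf{x}_i\in\mathbb{R}^p$. $g:\mathbb{R}_+\times\mathbb{R}^p\times\mathbb{R}^m\to\mathbb{R}$, $(t,\mathbf{x},\boldsymbol{\theta})\mapsto g(t,\mathbf{x};\boldsymbol{\theta})$, is a given function (a neural network). $\sigma(z)=1/(1+e^{-z})$. $p_{\boldsymbol{\theta}}$ is the density of $\mathcal{N}(\mathbf{0},\mathbf{I}_m)$ on $\mathbb{R}^m$. The normalizing function is $Z(t,\mathbf{x})=\int_{\mathbb{R}^m}\sigma(g(t,\mathbf{x};\boldsymbol{\theta}))\,p_{\boldsymbol{\theta}}(\boldsymbol{\theta})\,d\boldsymbol{\theta}$. For a fixed $\rho>0$ and $\phi>0$, $\lambda_0(t;\phi)=\phi\,t^{\rho-1}$ and $\lambda_0(t,\mathbf{x};\phi)=\lambda_0(t;\phi)/Z(t,\mathbf{x})$. $f(\omega,z)=\frac{z}{2}-\frac{z^2}{2}\omega-\log 2$. A random variable $\omega$ has the Pólya–Gamma distribution $\mathrm{PG}(b,c)$ ($b>0$, $c\in\mathbb{R}$) if $\omega\overset{d}{=}\frac{1}{2\pi^2}\sum_{k=1}^\infty \frac{g_k}{(k-1/2)^2+c^2/(4\pi^2)}$ with $g_k$ i.i.d. $\mathrm{Gamma}(b,1)$; $p_{\mathrm{PG}}(\omega\mid b,c)$ denotes its density on $\mathbb{R}_+$. A marked Poisson process on $[0,y]\times\mathbb{R}_+$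 with intensity $\lambda(t,\omega)$ is a Poisson point process on that product space with that intensity function. *)

theory Defs
  imports "HOL-Probability.Probability"
begin

definition sigmoid :: "real \<Rightarrow> real" where
  "sigmoid z = 1 / (1 + exp (- z))"

definition std_gauss_density :: "real ^ 'm::finite \<Rightarrow> real" where
  "std_gauss_density \<theta> = (\<Prod>k\<in>UNIV. std_normal_density (\<theta> $ k))"

definition Zfun :: "(real \<Rightarrow> real ^ 'p::finite \<Rightarrow> real ^ 'm::finite \<Rightarrow> real) \<Rightarrow> real \<Rightarrow> real ^ 'p \<Rightarrow> real" where
  "Zfun g t x = (\<integral>\<theta>. sigmoid (g t x \<theta>) * std_gauss_density \<theta> \<partial>lborel)"

definition base_hazard :: "real \<Rightarrow> real \<Rightarrow> real \<Rightarrow> real" where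
  "base_hazard \<rho> t \<phi> = \<phi> * t powr (\<rho> - 1)"

definition cov_hazard :: "(real \<Rightarrow> real ^ 'p::finite \<Rightarrow> real ^ 'm::finite \<Rightarrow> real) \<Rightarrow> real \<Rightarrow> real \<Rightarrow> real ^ 'p \<Rightarrow> real \<Rightarrow> real" where
  "cov_hazard g \<rho> t x \<phi> = base_hazard \<rho> t \<phi> / Zfun g t x"

definition fPG :: "real \<Rightarrow> real \<Rightarrow> real" where
  "fPG \<omega> z = z / 2 - z\<^sup>2 / 2 * \<omega> - ln 2"

definition gamma_dist :: "real \<Rightarrow> real measure" where
  "gamma_dist b = density lborel (\<lambda>x. ennreal (if x \<le> 0 then 0 else x powr (b - 1) * exp (- x) / Gamma b))"

text \<open>Polya-Gamma distribution PG(b,c): law of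
  1/(2 pi^2) * sum_{k>=1} g_k / ((k-1/2)^2 + c^2/(4 pi^2)) with g_k iid Gamma(b,1).
  (Index k here runs over nat starting at 0, i.e. k+1 in the paper's indexing.)\<close>
definition PG :: "real \<Rightarrow> real \<Rightarrow> real measure" where
  "PG b c = distr (PiM (UNIV :: nat set) (\<lambda>_. gamma_dist b)) borel
     (\<lambda>gs. 1 / (2 * pi\<^sup>2) * (\<Sum>k. gs k / ((real k + 1 / 2)\<^sup>2 + c\<^sup>2 / (4 * pi\<^sup>2))))"

definition PG_density :: "real \<Rightarrow> real \<Rightarrow> real \<Rightarrow> ennreal" where
  "PG_density b c \<omega> = RN_deriv lborel (PG b c) \<omega>"

text \<open>Law of a Poisson point process with finite intensity measure mu on a space S:
  N ~ Poisson(mu(S)) and, independently, iid points with law mu/mu(S).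
  A realisation is a pair (n, pts); the points of the process are pts 0, ..., pts (n-1).\<close>
definition poisson_process :: "'a measure \<Rightarrow> (nat \<times> (nat \<Rightarrow> 'a)) measure" where
  "poisson_process \<mu> =
     measure_pmf (poisson_pmf (measure \<mu> (space \<mu>)))
     \<Otimes>\<^sub>M PiM (UNIV :: nat set) (\<lambda>_. scale_measure (inverse (emeasure \<mu> (space \<mu>))) \<mu>)"

definition marked_intensity :: "(real \<Rightarrow> real ^ 'p::finite \<Rightarrow> real ^ 'm::finite \<Rightarrow> real) \<Rightarrow> real \<Rightarrow> real \<Rightarrow> real ^ 'p \<Rightarrow> real \<Rightarrow> (real \<times> real) measure" where
  "marked_intensity g \<rho> y x \<phi> =
     density (restrict_space lborel ({0..y} \<times> {0..}))
       (\<lambda>(t, \<omega>). ennreal (cov_hazard g \<rho> t x \<phi>) * PG_density 1 0 \<omega>)"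

definition likelihood :: "(real \<Rightarrow> real ^ 'p::finite \<Rightarrow> real ^ 'm::finite \<Rightarrow> real) \<Rightarrow> real \<Rightarrow> real \<Rightarrow> nat \<Rightarrow> real ^ 'p \<Rightarrow> real \<Rightarrow> real ^ 'm \<Rightarrow> real" where
  "likelihood g \<rho> y \<delta> x \<phi> \<theta> =
     (cov_hazard g \<rho> y x \<phi> * sigmoid (g y x \<theta>)) ^ \<delta>
     * exp (- (LINT t:{0..y}|lborel. cov_hazard g \<rho> t x \<phi> * sigmoid (g t x \<theta>)))"

definition aug_likelihood :: "(real \<Rightarrow> real ^ 'p::finite \<Rightarrow> real ^ 'm::finite \<Rightarrow> real) \<Rightarrow> real \<Rightarrow> real \<Rightarrow> nat \<Rightarrow> real ^ 'p \<Rightarrow> real \<Rightarrow> real ^ 'm \<Rightarrow> real \<Rightarrow> nat \<times> (nat \<Rightarrow> real \<times> real) \<Rightarrow> real" where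
  "aug_likelihood g \<rho> y \<delta> x \<phi> \<theta> \<omega> \<Psi> =
     (cov_hazard g \<rho> y x \<phi> * exp (fPG \<omega> (g y x \<theta>))) ^ \<delta>
     * (\<Prod>j<fst \<Psi>. exp (fPG (snd (snd \<Psi> j)) (- g (fst (snd \<Psi> j)) x \<theta>)))"

end

theory Submission
  imports Defs
begin

text \<open>
  For \<open>\<omega> \<sim> PG(1,0)\<close> the Laplace transform is \<open>E[exp(-z\<^sup>2\<omega>/2)] = 1 / cosh(z/2)\<close>: the summands
  of the defining series are independent exponential variables with Laplace transforms
  \<open>1/(1+b)\<close>, and their product is the Weierstrass product
  \<open>cosh(\<pi>w) = \<Prod>\<^sub>k (1 + w\<^sup>2/(k+1/2)\<^sup>2)\<close>. Hence \<open>E[exp f(\<omega>,z)] = \<sigma>(z)\<close>, which accounts for the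
  event factor. For the Poisson process with finite intensity \<open>\<mu>\<close> the exponential formula
  \<open>E[\<Prod>\<^sub>j H(\<psi>\<^sub>j)] = exp(\<integral>H d\<mu> - \<mu>(S))\<close> with \<open>H(t,\<omega>) = exp f(\<omega>,-g(t))\<close> gives
  \<open>exp(\<integral>\<lambda>\<^sub>0 \<sigma>(-g) - \<integral>\<lambda>\<^sub>0) = exp(-\<integral>\<lambda>\<^sub>0 \<sigma>(g))\<close>, because \<open>\<sigma>(-z) = 1 - \<sigma>(z)\<close>.
  The intensity is finite because \<open>Z\<close> is bounded away from 0 on \<open>[0,y]\<close>: \<open>g\<close> is bounded on
  \<open>[0,y] \<times> [-1,1]\<^sup>m\<close> by continuity and compactness.
\<close>

section \<open>The product formula for the hyperbolic cosine\<close>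

lemma prod_even_odd_split:
  fixes f :: "nat \<Rightarrow> 'a::comm_monoid_mult"
  shows "(\<Prod>k=1..2*n. f k) = (\<Prod>j=1..n. f (2*j)) * (\<Prod>j<n. f (2*j+1))"
proof (induction n)
  case 0 then show ?case by simp
next
  case (Suc n)
  have e: "{1..2 * Suc n} = insert (2*n+2) (insert (2*n+1) {1..2*n})" by auto
  have "(\<Prod>k=1..2*Suc n. f k) = f (2*n+2) * (f (2*n+1) * (\<Prod>k=1..2*n. f k))"
    unfolding e by (subst prod.insert; simp)+
  also have "\<dots> = (\<Prod>j=1..Suc n. f (2*j)) * (\<Prod>j<Suc n. f (2*j+1))"
    using Suc by (simp add: ac_simps)
  finally show ?case .
qed

text \<open>The sine product at \<open>2z\<close> splits into the sine product at \<open>z\<close> (even factors) times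
  the cosine product (odd factors), and \<open>sin(2\<pi>z) = 2 sin(\<pi>z) cos(\<pi>z)\<close>.\<close>

lemma cos_product_formula_complex:
  fixes z :: complex
  assumes nz: "sin (of_real pi * z) \<noteq> 0"
  shows "(\<lambda>n. \<Prod>k<n. 1 - z^2 / (of_nat k + 1/2)^2) \<longlonglongrightarrow> cos (of_real pi * z)"
proof -
  define P where "P = (\<lambda>z n. of_real pi * z * (\<Prod>k=1..n. 1 - z^2 / (of_nat k:: complex)^2))"
  define Q where "Q = (\<lambda>n. \<Prod>k<n. 1 - z^2 / (of_nat k + 1/2 :: complex)^2)"
  have doubling: "P (2*z) (2*n) = 2 * P z n * Q n" for n
  proof -
    have "(\<Prod>k=1..2*n. 1 - (2*z)^2 / (of_nat k:: complex)^2)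
       = (\<Prod>j=1..n. 1 - (2*z)^2 / (of_nat (2*j):: complex)^2) * (\<Prod>j<n. 1 - (2*z)^2 / (of_nat (2*j+1):: complex)^2)"
      by (rule prod_even_odd_split)
    also have "(\<Prod>j=1..n. 1 - (2*z)^2 / (of_nat (2*j):: complex)^2) = (\<Prod>j=1..n. 1 - z^2 / (of_nat j:: complex)^2)"
      by (intro prod.cong refl) (simp add: power2_eq_square)
    also have "(\<Prod>j<n. 1 - (2*z)^2 / (of_nat (2*j+1):: complex)^2) = Q n"
      unfolding Q_def
    proof (intro prod.cong refl)
      fix j
      have odd: "(of_nat (2*j+1) :: complex) = 2 * (of_nat j + 1/2)" by simp
      show "1 - (2*z)^2 / (of_nat (2*j+1):: complex)^2 = 1 - z^2 / (of_nat j + 1/2 :: complex)^2"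
        by (simp only: odd power_mult_distrib) simp
    qed
    finally show ?thesis unfolding P_def by (simp add: ac_simps)
  qed
  have P_2z: "(\<lambda>n. P (2*z) (2*n)) \<longlonglongrightarrow> sin (of_real pi * (2*z))"
  proof -
    have "(\<lambda>n. P (2*z) n) \<longlonglongrightarrow> sin (of_real pi * (2*z))"
      unfolding P_def by (rule sin_product_formula_complex)
    moreover have "filterlim (\<lambda>n::nat. 2*n) sequentially sequentially"
      by (rule filterlim_subseq) (auto simp: strict_mono_def)
    ultimately show ?thesis by (rule filterlim_compose)
  qed
  have P_z: "(\<lambda>n. P z n) \<longlonglongrightarrow> sin (of_real pi * z)"
    unfolding P_def by (rule sin_product_formula_complex)
  have "(\<lambda>n. P (2*z) (2*n) / (2 * P z n)) \<longlonglongrightarrow> sin (of_real pi * (2*z)) / (2 * sin (of_real pi * z))"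
    using nz by (intro tendsto_intros P_2z P_z) auto
  moreover have "eventually (\<lambda>n. P (2*z) (2*n) / (2 * P z n) = Q n) sequentially"
    using tendsto_imp_eventually_ne[OF P_z nz] by eventually_elim (simp add: doubling)
  ultimately have "Q \<longlonglongrightarrow> sin (of_real pi * (2*z)) / (2 * sin (of_real pi * z))"
    by (rule Lim_transform_eventually)
  also have "sin (of_real pi * (2*z)) / (2 * sin (of_real pi * z)) = cos (of_real pi * z)"
  proof -
    have "sin (of_real pi * (2*z)) = sin (2 * (of_real pi * z))" by (simp add: ac_simps)
    also have "\<dots> = 2 * sin (of_real pi * z) * cos (of_real pi * z)" by (rule sin_double)
    finally show ?thesis using nz by simp
  qed
  finally show ?thesis unfolding Q_def .
qed

lemma cosh_product_formula:
  fixes w :: real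
  shows "(\<lambda>n. \<Prod>k<n. 1 + w^2 / (real k + 1/2)^2) \<longlonglongrightarrow> cosh (pi * w)"
proof (cases "w = 0")
  case True then show ?thesis by simp
next
  case False
  define z where "z = \<i> * complex_of_real w"
  have nz: "sin (of_real pi * z) \<noteq> 0"
  proof
    assume "sin (of_real pi * z) = 0"
    then obtain n :: int where "of_real pi * z = of_real (n * pi)" by (auto simp: sin_eq_0)
    then have "Im (of_real pi * z) = Im (of_real (n * pi))" by simp
    then show False using False by (simp add: z_def)
  qed
  from cos_product_formula_complex[OF nz]
  have "(\<lambda>n. \<Prod>k<n. 1 - z^2 / (of_nat k + 1/2)^2) \<longlonglongrightarrow> cos (of_real pi * z)" .
  also have "(\<lambda>n. \<Prod>k<n. 1 - z^2 / (of_nat k + 1/2)^2) = (\<lambda>n. complex_of_real (\<Prod>k<n. 1 + w^2 / (real k + 1/2)^2))"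
    by (simp add: z_def power_mult_distrib)
  also have "cos (of_real pi * z) = complex_of_real (cosh (pi * w))"
    by (simp add: z_def cos_conv_cosh cosh_field_def exp_of_real[symmetric] ac_simps)
  finally show ?thesis by (simp only: tendsto_of_real_iff)
qed

section \<open>The logistic function\<close>

lemma sigmoid_pos: "0 < sigmoid z"
  unfolding sigmoid_def by (simp add: add_pos_pos)

lemma sigmoid_le_1: "sigmoid z \<le> 1"
  unfolding sigmoid_def by (simp add: add_pos_pos)

lemma sigmoid_mono: "a \<le> b \<Longrightarrow> sigmoid a \<le> sigmoid b"
  unfolding sigmoid_def by (intro divide_left_mono) (auto simp: add_pos_pos)

lemma sigmoid_minus: "sigmoid (- z) = 1 - sigmoid z"
proof -
  have "1 + exp z \<noteq> 0" using exp_gt_zero[of z] by linarith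
  then show ?thesis unfolding sigmoid_def
    by (simp add: field_simps exp_minus add_divide_distrib[symmetric])
qed

lemma sigmoid_eq_exp_div_cosh: "sigmoid z = exp (z/2) / 2 * (1 / cosh (z/2))"
proof -
  have e: "exp z = exp (z/2) * exp (z/2)" by (simp add: exp_add[symmetric])
  have "exp (z/2) / 2 * (1 / cosh (z/2)) = exp (z/2) / (exp (z/2) + exp (- (z/2)))"
    by (simp add: cosh_def)
  also have "\<dots> = 1 / (1 + exp (- z))"
    by (simp add: exp_minus e field_simps)
  finally show ?thesis by (simp add: sigmoid_def)
qed

lemma continuous_on_sigmoid: "continuous_on UNIV sigmoid"
  unfolding sigmoid_def[abs_def] by (intro continuous_intros) (smt (verit) exp_gt_zero)

lemma borel_measurable_sigmoid[measurable]: "sigmoid \<in> borel_measurable borel"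
  by (rule borel_measurable_continuous_onI[OF continuous_on_sigmoid])

section \<open>The exponential distribution Gamma(1,1)\<close>

lemma gamma_dist_1_eq: "gamma_dist 1 = density lborel (\<lambda>x. ennreal (if x \<le> 0 then 0 else exp (- x)))"
  unfolding gamma_dist_def by (intro density_cong) auto

lemma sets_gamma_dist_1[measurable_cong, simp]: "sets (gamma_dist 1) = sets borel"
  unfolding gamma_dist_1_eq by simp

lemma space_gamma_dist_1[simp]: "space (gamma_dist 1) = UNIV"
  unfolding gamma_dist_1_eq by simp

lemma nn_integral_exp_neg_scaled:
  fixes l :: real assumes l: "l > 0"
  shows "(\<integral>\<^sup>+ x. ennreal (if x \<le> 0 then 0 else exp (- (l * x))) \<partial>lborel) = ennreal (1 / l)"
proof -
  interpret prob_space "density lborel (exponential_density l)"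
    using prob_space_exponential_density[OF l] .
  have "1 = emeasure (density lborel (exponential_density l)) UNIV"
    using emeasure_space_1 by simp
  also have "\<dots> = (\<integral>\<^sup>+ x. ennreal (exponential_density l x) \<partial>lborel)"
    by (subst emeasure_density) auto
  also have "\<dots> = (\<integral>\<^sup>+ x. ennreal l * ennreal (if x \<le> 0 then 0 else exp (- (l * x))) \<partial>lborel)"
  proof (rule nn_integral_cong_AE)
    show "AE x in lborel. ennreal (exponential_density l x) = ennreal l * ennreal (if x \<le> 0 then 0 else exp (- (l * x)))"
      using AE_lborel_singleton[of "0::real"]
      by eventually_elim (use l in \<open>auto simp: exponential_density_def ennreal_mult'[symmetric] ac_simps\<close>)
  qed
  also have "\<dots> = ennreal l * (\<integral>\<^sup>+ x. ennreal (if x \<le> 0 then 0 else exp (- (l * x))) \<partial>lborel)"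
    by (rule nn_integral_cmult) auto
  finally have "ennreal l * (\<integral>\<^sup>+ x. ennreal (if x \<le> 0 then 0 else exp (- (l * x))) \<partial>lborel) = 1" by simp
  then have "(\<integral>\<^sup>+ x. ennreal (if x \<le> 0 then 0 else exp (- (l * x))) \<partial>lborel) = 1 / ennreal l"
    using l ennreal_mult_divide_eq[of "ennreal l" "(\<integral>\<^sup>+ x. ennreal (if x \<le> 0 then 0 else exp (- (l * x))) \<partial>lborel)"]
    by (simp add: mult.commute)
  then show ?thesis using l divide_ennreal[of 1 l] by simp
qed

lemma gamma_dist_1_laplace:
  fixes b :: real assumes b: "b > -1"
  shows "(\<integral>\<^sup>+ x. ennreal (exp (- (b * x))) \<partial>gamma_dist 1) = ennreal (1 / (1 + b))"
proof -
  have "(\<integral>\<^sup>+ x. ennreal (exp (- (b * x))) \<partial>gamma_dist 1)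
     = (\<integral>\<^sup>+ x. ennreal (if x \<le> 0 then 0 else exp (- x)) * ennreal (exp (- (b * x))) \<partial>lborel)"
    unfolding gamma_dist_1_eq by (subst nn_integral_density) auto
  also have "\<dots> = (\<integral>\<^sup>+ x. ennreal (if x \<le> 0 then 0 else exp (- ((1 + b) * x))) \<partial>lborel)"
    by (intro nn_integral_cong) (auto simp: ennreal_mult'[symmetric] exp_add[symmetric] algebra_simps)
  also have "\<dots> = ennreal (1 / (1 + b))"
    using b by (intro nn_integral_exp_neg_scaled) auto
  finally show ?thesis .
qed

lemma prob_space_gamma_dist_1: "prob_space (gamma_dist 1)"
proof
  have "emeasure (gamma_dist 1) (space (gamma_dist 1)) = (\<integral>\<^sup>+ x. ennreal (exp (- (0 * x))) \<partial>gamma_dist 1)"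
    by (subst nn_integral_cong[where v = "\<lambda>_. 1"]) auto
  also have "\<dots> = 1" using gamma_dist_1_laplace[of 0] by simp
  finally show "emeasure (gamma_dist 1) (space (gamma_dist 1)) = 1" .
qed

lemma AE_gamma_dist_1_pos: "AE x in gamma_dist 1. x > 0"
  unfolding gamma_dist_1_eq by (subst AE_density) (auto intro!: AE_I2)

lemma gamma_dist_1_mean_finite: "(\<integral>\<^sup>+ x. ennreal x \<partial>gamma_dist 1) < \<infinity>"
proof -
  have "(\<integral>\<^sup>+ x. ennreal x \<partial>gamma_dist 1) \<le> (\<integral>\<^sup>+ x. ennreal 2 * ennreal (exp (- ((-1/2) * x))) \<partial>gamma_dist 1)"
  proof (rule nn_integral_mono)
    fix x :: real
    have "x / 2 \<le> exp (x / 2)" using exp_ge_add_one_self[of "x/2"] by linarith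
    then have "ennreal x \<le> ennreal (2 * exp (- ((-1/2) * x)))"
      by (intro ennreal_leI) (simp add: ac_simps)
    then show "ennreal x \<le> ennreal 2 * ennreal (exp (- ((-1/2) * x)))"
      by (simp add: ennreal_mult)
  qed
  also have "\<dots> = ennreal 2 * ennreal (1 / (1 + (-1/2)))"
    using gamma_dist_1_laplace[of "-1/2"] by (subst nn_integral_cmult) auto
  also have "\<dots> < \<infinity>" by (simp add: ennreal_mult_less_top)
  finally show ?thesis .
qed

lemma nn_integral_gamma_dist_1_le_lborel:
  assumes [measurable]: "f \<in> borel_measurable borel"
  shows "(\<integral>\<^sup>+ x. f x \<partial>gamma_dist 1) \<le> (\<integral>\<^sup>+ x. f x \<partial>lborel)"
proof -
  have "(\<integral>\<^sup>+ x. f x \<partial>gamma_dist 1) = (\<integral>\<^sup>+ x. ennreal (if x \<le> 0 then 0 else exp (- x)) * f x \<partial>lborel)"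
    unfolding gamma_dist_1_eq by (rule nn_integral_density) auto
  also have "\<dots> \<le> (\<integral>\<^sup>+ x. 1 * f x \<partial>lborel)"
    by (intro nn_integral_mono mult_right_mono) (auto simp: ennreal_le_1)
  finally show ?thesis by simp
qed

lemma nn_integral_gamma_dist_1_affine_null:
  assumes A: "A \<in> null_sets lborel" and c: "c \<noteq> 0"
  shows "(\<integral>\<^sup>+s. indicator A (t + c * s) \<partial>gamma_dist 1) = 0"
proof -
  have [measurable]: "A \<in> sets borel" using A by auto
  have "AE s in lborel. t + c * s \<notin> A"
    using AE_borel_affine[OF c, of "\<lambda>x. x \<notin> A"] AE_not_in[OF A] by simp
  then have "(\<integral>\<^sup>+s. indicator A (t + c * s) \<partial>lborel) = 0"
    by (subst nn_integral_0_iff_AE) (auto elim: eventually_mono)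
  moreover have "(\<integral>\<^sup>+s. indicator A (t + c * s) \<partial>gamma_dist 1) \<le> (\<integral>\<^sup>+s. indicator A (t + c * s) \<partial>lborel)"
    by (rule nn_integral_gamma_dist_1_le_lborel) measurable
  ultimately show ?thesis by simp
qed

section \<open>The Polya-Gamma distribution PG(1,0)\<close>

abbreviation gamma_seq :: "(nat \<Rightarrow> real) measure" where
  "gamma_seq \<equiv> PiM UNIV (\<lambda>_::nat. gamma_dist 1)"

definition pg_series :: "(nat \<Rightarrow> real) \<Rightarrow> real" where
  "pg_series gs = 1 / (2 * pi\<^sup>2) * (\<Sum>k. gs k / (real k + 1 / 2)\<^sup>2)"

lemma PG_1_0_eq_distr: "PG 1 0 = distr gamma_seq borel pg_series"
  unfolding PG_def pg_series_def by simp

lemma borel_measurable_pg_series[measurable]: "pg_series \<in> borel_measurable gamma_seq"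
  unfolding pg_series_def by measurable

lemma borel_measurable_fPG[measurable]:
  assumes [measurable]: "f \<in> borel_measurable M" "g \<in> borel_measurable M"
  shows "(\<lambda>x. fPG (f x) (g x)) \<in> borel_measurable M"
  unfolding fPG_def by measurable

lemma prob_space_gamma_seq: "prob_space gamma_seq"
  by (intro prob_space_PiM prob_space_gamma_dist_1)

lemma prob_space_PG_1_0: "prob_space (PG 1 0)"
  unfolding PG_1_0_eq_distr by (intro prob_space.prob_space_distr prob_space_gamma_seq) measurable

lemma sets_PG_1_0[simp, measurable_cong]: "sets (PG 1 0) = sets borel"
  unfolding PG_1_0_eq_distr by simp

lemma space_PG_1_0[simp]: "space (PG 1 0) = UNIV"
  unfolding PG_1_0_eq_distr by simp

lemma nn_integral_PiM_prod_lessThan: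
  fixes M :: "'a measure" and h :: "nat \<Rightarrow> 'a \<Rightarrow> ennreal"
  assumes M: "prob_space M" and [measurable]: "\<And>k. h k \<in> borel_measurable M"
  shows "(\<integral>\<^sup>+\<omega>. (\<Prod>k<n. h k (\<omega> k)) \<partial>PiM UNIV (\<lambda>_::nat. M)) = (\<Prod>k<n. \<integral>\<^sup>+x. h k x \<partial>M)"
proof -
  interpret product_prob_space "\<lambda>_::nat. M" UNIV
    using M by (auto simp: product_prob_space_def product_prob_space_axioms_def product_sigma_finite_def
        prob_space_imp_sigma_finite)
  have "(\<integral>\<^sup>+\<omega>. (\<Prod>k<n. h k (\<omega> k)) \<partial>PiM UNIV (\<lambda>_::nat. M))
      = (\<integral>\<^sup>+\<omega>. (\<Prod>k\<in>{..<n}. h k (restrict \<omega> {..<n} k)) \<partial>PiM UNIV (\<lambda>_::nat. M))"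
    by (intro nn_integral_cong) simp
  also have "\<dots> = (\<integral>\<^sup>+x. (\<Prod>k\<in>{..<n}. h k (x k)) \<partial>distr (PiM UNIV (\<lambda>_::nat. M)) (PiM {..<n} (\<lambda>_. M)) (\<lambda>\<omega>. restrict \<omega> {..<n}))"
    by (subst nn_integral_distr) auto
  also have "\<dots> = (\<integral>\<^sup>+x. (\<Prod>k\<in>{..<n}. h k (x k)) \<partial>PiM {..<n} (\<lambda>_. M))"
    by (subst distr_PiM_restrict_finite) auto
  also have "\<dots> = (\<Prod>k<n. \<integral>\<^sup>+x. h k x \<partial>M)"
    by (rule product_nn_integral_prod) auto
  finally show ?thesis .
qed

lemma nn_integral_PiM_component:
  assumes M: "prob_space M" and [measurable]: "f \<in> borel_measurable M"
  shows "(\<integral>\<^sup>+\<omega>. f (\<omega> k) \<partial>PiM UNIV (\<lambda>_::nat. M)) = (\<integral>\<^sup>+x. f x \<partial>M)"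
proof -
  have "(\<integral>\<^sup>+\<omega>. f (\<omega> k) \<partial>PiM UNIV (\<lambda>_::nat. M)) = (\<integral>\<^sup>+x. f x \<partial>distr (PiM UNIV (\<lambda>_::nat. M)) M (\<lambda>\<omega>. \<omega> k))"
    by (subst nn_integral_distr) auto
  also have "\<dots> = (\<integral>\<^sup>+x. f x \<partial>M)"
    using M by (subst distr_PiM_component) auto
  finally show ?thesis .
qed

lemma summable_inverse_square_half: "summable (\<lambda>k. 1 / (real k + 1/2)^2)"
proof (rule summable_comparison_test)
  have "summable (\<lambda>n. inverse (real n ^ 2))"
    by (rule inverse_power_summable) simp
  then show "summable (\<lambda>n. 4 * inverse (real (Suc n) ^ 2))"
    by (subst summable_Suc_iff) (rule summable_mult)
  show "\<exists>N. \<forall>n\<ge>N. norm (1 / (real n + 1/2)^2) \<le> 4 * inverse (real (Suc n) ^ 2)"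
  proof (intro exI allI impI)
    fix n :: nat
    have "(real n + 1)^2 \<le> 4 * (real n + 1/2)^2"
      by (simp add: power2_eq_square algebra_simps)
    then show "norm (1 / (real n + 1/2)^2) \<le> 4 * inverse (real (Suc n) ^ 2)"
      by (simp add: field_simps)
  qed
qed

text \<open>The series defining PG(1,0) converges almost surely because its expectation is finite.\<close>

lemma AE_gamma_seq: "AE gs in gamma_seq. (\<forall>k. 0 < gs k) \<and> summable (\<lambda>k. gs k / (real k + 1/2)^2)"
proof -
  have pos: "AE gs in gamma_seq. \<forall>k. 0 < gs k"
    by (subst AE_all_countable) (intro allI AE_PiM_component prob_space_gamma_dist_1 AE_gamma_dist_1_pos, auto)
  have "(\<integral>\<^sup>+gs. (\<Sum>k. ennreal (gs k / (real k + 1/2)^2)) \<partial>gamma_seq)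
     = (\<Sum>k. \<integral>\<^sup>+gs. ennreal (gs k / (real k + 1/2)^2) \<partial>gamma_seq)"
    by (rule nn_integral_suminf) measurable
  also have "\<dots> = (\<Sum>k. ennreal (1 / (real k + 1/2)^2) * (\<integral>\<^sup>+x. ennreal x \<partial>gamma_dist 1))"
  proof (intro suminf_cong)
    fix k
    have "(\<integral>\<^sup>+gs. ennreal (gs k / (real k + 1/2)^2) \<partial>gamma_seq)
        = (\<integral>\<^sup>+x. ennreal (1 / (real k + 1/2)^2) * ennreal x \<partial>gamma_dist 1)"
      by (subst nn_integral_PiM_component[OF prob_space_gamma_dist_1])
         (auto intro!: nn_integral_cong simp: ennreal_mult'[symmetric])
    also have "\<dots> = ennreal (1 / (real k + 1/2)^2) * (\<integral>\<^sup>+x. ennreal x \<partial>gamma_dist 1)"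
      by (rule nn_integral_cmult) measurable
    finally show "(\<integral>\<^sup>+gs. ennreal (gs k / (real k + 1/2)^2) \<partial>gamma_seq) = \<dots>" .
  qed
  also have "\<dots> = ennreal (\<Sum>k. 1 / (real k + 1/2)^2) * (\<integral>\<^sup>+x. ennreal x \<partial>gamma_dist 1)"
    by (simp add: suminf_ennreal2 summable_inverse_square_half)
  also have "\<dots> < \<infinity>"
    using gamma_dist_1_mean_finite by (simp add: ennreal_mult_less_top)
  finally have "(\<integral>\<^sup>+gs. (\<Sum>k. ennreal (gs k / (real k + 1/2)^2)) \<partial>gamma_seq) \<noteq> \<infinity>"
    by simp
  then have "AE gs in gamma_seq. (\<Sum>k. ennreal (gs k / (real k + 1/2)^2)) \<noteq> \<infinity>"
    by (rule nn_integral_PInf_AE[rotated]) measurable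
  with pos show ?thesis
  proof eventually_elim
    case (elim gs)
    then have "summable (\<lambda>k. gs k / (real k + 1/2)^2)"
      by (intro summable_suminf_not_top) (auto intro: less_imp_le)
    with elim show ?case by simp
  qed
qed

lemma pg_series_nonneg: "(\<forall>k. 0 < gs k) \<Longrightarrow> summable (\<lambda>k. gs k / (real k + 1/2)^2) \<Longrightarrow> 0 \<le> pg_series gs"
  unfolding pg_series_def by (intro mult_nonneg_nonneg suminf_nonneg) (auto intro: less_imp_le)

lemma AE_PG_1_0_nonneg: "AE \<omega> in PG 1 0. 0 \<le> \<omega>"
proof -
  have "AE gs in gamma_seq. 0 \<le> pg_series gs"
    using AE_gamma_seq by eventually_elim (auto intro: pg_series_nonneg)
  then show ?thesis unfolding PG_1_0_eq_distr by (subst AE_distr_iff) auto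
qed

lemma pg_series_scaled_LIMSEQ:
  assumes "summable (\<lambda>k. gs k / (real k + 1/2)^2)"
  shows "(\<lambda>n. \<Sum>k<n. ((z/(2*pi))^2 / (real k + 1/2)^2) * gs k) \<longlonglongrightarrow> z^2/2 * pg_series gs"
proof -
  have "(\<lambda>n. \<Sum>k<n. ((z/(2*pi))^2 / (real k + 1/2)^2) * gs k)
      \<longlonglongrightarrow> (\<Sum>k. (z/(2*pi))^2 * (gs k / (real k + 1/2)^2))"
    using summable_LIMSEQ[OF summable_mult[OF assms, of "(z/(2*pi))^2"]] by simp
  also have "(\<Sum>k. (z/(2*pi))^2 * (gs k / (real k + 1/2)^2)) = z^2/2 * pg_series gs"
    unfolding suminf_mult[OF assms] pg_series_def by (simp add: power_divide power_mult_distrib)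
  finally show ?thesis .
qed

lemma PG_1_0_laplace: "(\<integral>\<^sup>+\<omega>. ennreal (exp (-(z^2/2 * \<omega>))) \<partial>PG 1 0) = ennreal (1 / cosh (z/2))"
proof -
  interpret G: prob_space gamma_seq by (rule prob_space_gamma_seq)
  define b where "b k = (z/(2*pi))^2 / (real k + 1/2)^2" for k
  have b_nonneg: "0 \<le> b k" for k unfolding b_def by simp
  define u where "u n gs = (\<Prod>k<n. ennreal (exp (- (b k * gs k))))" for n gs
  have u_eq: "u n gs = ennreal (exp (- (\<Sum>k<n. b k * gs k)))" for n gs
    unfolding u_def by (subst prod_ennreal) (auto simp: exp_sum[symmetric] sum_negf)
  have int_u: "(\<integral>\<^sup>+gs. u n gs \<partial>gamma_seq) = ennreal (1 / (\<Prod>k<n. 1 + b k))" for n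
  proof -
    have "(\<integral>\<^sup>+gs. u n gs \<partial>gamma_seq) = (\<Prod>k<n. \<integral>\<^sup>+x. ennreal (exp (- (b k * x))) \<partial>gamma_dist 1)"
      unfolding u_def by (rule nn_integral_PiM_prod_lessThan[OF prob_space_gamma_dist_1]) measurable
    also have "\<dots> = (\<Prod>k<n. ennreal (1 / (1 + b k)))"
      using b_nonneg by (intro prod.cong refl gamma_dist_1_laplace) (auto intro: less_le_trans[of _ 0])
    also have "\<dots> = ennreal (1 / (\<Prod>k<n. 1 + b k))"
      using b_nonneg by (subst prod_ennreal) (auto simp: prod_dividef intro!: add_nonneg_nonneg)
    finally show ?thesis .
  qed
  have "(\<lambda>n. \<integral>\<^sup>+gs. u n gs \<partial>gamma_seq) \<longlonglongrightarrow> (\<integral>\<^sup>+gs. ennreal (exp (-(z^2/2 * pg_series gs))) \<partial>gamma_seq)"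
  proof (rule nn_integral_dominated_convergence[where w = "\<lambda>_. 1"])
    show "AE gs in gamma_seq. u n gs \<le> 1" for n
      using AE_gamma_seq
    proof eventually_elim
      case (elim gs)
      then have "0 \<le> (\<Sum>k<n. b k * gs k)"
        using b_nonneg by (intro sum_nonneg mult_nonneg_nonneg) (auto intro: less_imp_le)
      then show ?case by (simp add: u_eq)
    qed
    show "AE gs in gamma_seq. (\<lambda>n. u n gs) \<longlonglongrightarrow> ennreal (exp (-(z^2/2 * pg_series gs)))"
      using AE_gamma_seq
    proof eventually_elim
      case (elim gs)
      then have "(\<lambda>n. \<Sum>k<n. b k * gs k) \<longlonglongrightarrow> z^2/2 * pg_series gs"
        unfolding b_def by (intro pg_series_scaled_LIMSEQ) auto
      then show ?case
        unfolding u_eq by (intro tendsto_ennrealI tendsto_intros)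
    qed
  qed (use G.emeasure_space_1 in \<open>auto simp: u_def\<close>)
  moreover have "(\<lambda>n. ennreal (1 / (\<Prod>k<n. 1 + b k))) \<longlonglongrightarrow> ennreal (1 / cosh (z/2))"
  proof -
    have "(\<lambda>n. \<Prod>k<n. 1 + b k) \<longlonglongrightarrow> cosh (pi * (z/(2*pi)))"
      unfolding b_def by (rule cosh_product_formula)
    then show ?thesis
      by (intro tendsto_ennrealI tendsto_intros) (auto intro: order.strict_trans2[OF _ cosh_real_ge_1])
  qed
  ultimately have "(\<integral>\<^sup>+gs. ennreal (exp (-(z^2/2 * pg_series gs))) \<partial>gamma_seq) = ennreal (1 / cosh (z/2))"
    unfolding int_u by (rule LIMSEQ_unique)
  then show ?thesis
    unfolding PG_1_0_eq_distr by (subst nn_integral_distr) auto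
qed

lemma nn_integral_PG_1_0_exp_fPG: "(\<integral>\<^sup>+\<omega>. ennreal (exp (fPG \<omega> z)) \<partial>PG 1 0) = ennreal (sigmoid z)"
proof -
  have exp_fPG: "ennreal (exp (fPG \<omega> z)) = ennreal (exp (z/2) / 2) * ennreal (exp (-(z^2/2 * \<omega>)))" for \<omega>
  proof -
    have "fPG \<omega> z = z/2 + (-(z^2/2*\<omega>)) + (- ln 2)" by (simp add: fPG_def algebra_simps)
    then have "exp (fPG \<omega> z) = exp (z/2) * exp (-(z^2/2*\<omega>)) * exp (- ln 2)"
      by (simp only: exp_add)
    moreover have "exp (- ln 2) = (1/2::real)" by (simp add: exp_minus)
    ultimately have "exp (fPG \<omega> z) = exp (z/2) / 2 * exp (-(z^2/2 * \<omega>))" by simp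
    then show ?thesis by (simp add: ennreal_mult[symmetric])
  qed
  have "(\<integral>\<^sup>+\<omega>. ennreal (exp (fPG \<omega> z)) \<partial>PG 1 0)
      = (\<integral>\<^sup>+\<omega>. ennreal (exp (z/2) / 2) * ennreal (exp (-(z^2/2 * \<omega>))) \<partial>PG 1 0)"
    by (simp only: exp_fPG)
  also have "\<dots> = ennreal (exp (z/2) / 2) * (\<integral>\<^sup>+\<omega>. ennreal (exp (-(z^2/2 * \<omega>))) \<partial>PG 1 0)"
    by (rule nn_integral_cmult) simp
  also have "\<dots> = ennreal (exp (z/2) / 2) * ennreal (1 / cosh (z/2))"
    by (simp only: PG_1_0_laplace)
  also have "\<dots> = ennreal (sigmoid z)"
    using cosh_real_ge_1[of "z/2"] by (simp add: sigmoid_eq_exp_div_cosh ennreal_mult[symmetric])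
  finally show ?thesis .
qed

lemma nn_integral_PG_1_0_event_factor:
  assumes "0 \<le> l" and "\<delta> \<in> {0, 1}"
  shows "(\<integral>\<^sup>+\<omega>. ennreal ((l * exp (fPG \<omega> z)) ^ \<delta>) \<partial>PG 1 0) = ennreal ((l * sigmoid z) ^ \<delta>)"
proof (cases "\<delta> = 0")
  case True
  interpret prob_space "PG 1 0" by (rule prob_space_PG_1_0)
  show ?thesis using True emeasure_space_1 by simp
next
  case False
  with assms have "\<delta> = 1" by auto
  with assms have "(\<integral>\<^sup>+\<omega>. ennreal ((l * exp (fPG \<omega> z)) ^ \<delta>) \<partial>PG 1 0)
      = (\<integral>\<^sup>+\<omega>. ennreal l * ennreal (exp (fPG \<omega> z)) \<partial>PG 1 0)"
    by (simp add: ennreal_mult)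
  also have "\<dots> = ennreal l * ennreal (sigmoid z)"
    by (simp add: nn_integral_cmult nn_integral_PG_1_0_exp_fPG)
  finally show ?thesis
    using assms \<open>\<delta> = 1\<close> sigmoid_pos[of z] by (simp add: ennreal_mult)
qed

lemma pg_series_case_nat:
  assumes pos: "\<forall>k. 0 < \<omega> k" and sm: "summable (\<lambda>k. \<omega> k / (real k + 1/2)^2)"
  shows "pg_series (case_nat s \<omega>) = 2 / pi^2 * s + 1 / (2 * pi\<^sup>2) * (\<Sum>k. \<omega> k / (real (Suc k) + 1/2)^2)"
proof -
  define f where "f k = case_nat s \<omega> k / (real k + 1/2)^2" for k
  have "summable (\<lambda>k. f (Suc k))"
  proof (rule summable_comparison_test[OF _ sm], intro exI allI impI)
    fix k :: nat
    have "(real k + 1/2)^2 \<le> (real (Suc k) + 1/2)^2"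
      by (intro power_mono) auto
    then show "norm (f (Suc k)) \<le> \<omega> k / (real k + 1/2)^2"
      using pos[rule_format, of k] unfolding f_def
      by (auto intro!: divide_left_mono mult_pos_pos simp: add_pos_pos)
  qed
  then have "summable f" by (simp add: summable_Suc_iff)
  then have "suminf f = f 0 + (\<Sum>k. f (Suc k))"
    using suminf_split_head[OF \<open>summable f\<close>] by simp
  then have "suminf f = 4 * s + (\<Sum>k. \<omega> k / (real (Suc k) + 1/2)^2)"
    by (simp add: f_def power2_eq_square)
  then show ?thesis unfolding pg_series_def f_def[symmetric] by (simp add: field_simps power2_eq_square)
qed

text \<open>Conditioning on all but the first summand, \<open>\<omega>\<close> is an affine image of a Gamma(1,1)
  variable, which has a density.\<close>

lemma absolutely_continuous_PG_1_0: "absolutely_continuous lborel (PG 1 0)"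
  unfolding absolutely_continuous_def
proof (intro subsetI)
  fix A :: "real set" assume A: "A \<in> null_sets lborel"
  then have [measurable]: "A \<in> sets borel" by auto
  interpret S: sequence_space "gamma_dist 1"
    by (auto simp: sequence_space_def product_prob_space_def product_prob_space_axioms_def
        product_sigma_finite_def prob_space_imp_sigma_finite prob_space_gamma_dist_1)
  interpret G: prob_space "gamma_dist 1" by (rule prob_space_gamma_dist_1)
  interpret Gseq: prob_space gamma_seq by (rule prob_space_gamma_seq)
  interpret P: pair_prob_space "gamma_dist 1" gamma_seq ..
  have "emeasure (PG 1 0) A = (\<integral>\<^sup>+x. indicator A x \<partial>PG 1 0)"
    by simp
  also have "\<dots> = (\<integral>\<^sup>+gs. indicator A (pg_series gs) \<partial>gamma_seq)"
    unfolding PG_1_0_eq_distr by (subst nn_integral_distr) auto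
  also have "\<dots> = (\<integral>\<^sup>+x. indicator A (pg_series (case_prod case_nat x)) \<partial>(gamma_dist 1 \<Otimes>\<^sub>M gamma_seq))"
    by (subst S.PiM_iter[symmetric]) (auto simp: nn_integral_distr split_beta')
  also have "\<dots> = (\<integral>\<^sup>+\<omega>. (\<integral>\<^sup>+s. indicator A (pg_series (case_nat s \<omega>)) \<partial>gamma_dist 1) \<partial>gamma_seq)"
    by (subst P.nn_integral_snd[symmetric]) (auto simp: split_beta')
  also have "\<dots> = (\<integral>\<^sup>+\<omega>. 0 \<partial>gamma_seq)"
  proof (rule nn_integral_cong_AE)
    show "AE \<omega> in gamma_seq. (\<integral>\<^sup>+s. indicator A (pg_series (case_nat s \<omega>)) \<partial>gamma_dist 1) = 0"
      using AE_gamma_seq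
    proof eventually_elim
      case (elim \<omega>)
      then have "(\<integral>\<^sup>+s. indicator A (pg_series (case_nat s \<omega>)) \<partial>gamma_dist 1)
          = (\<integral>\<^sup>+s. indicator A (1 / (2 * pi\<^sup>2) * (\<Sum>k. \<omega> k / (real (Suc k) + 1/2)^2) + 2 / pi^2 * s) \<partial>gamma_dist 1)"
        by (intro nn_integral_cong) (simp add: pg_series_case_nat add.commute)
      also have "\<dots> = 0"
        using A by (rule nn_integral_gamma_dist_1_affine_null) simp
      finally show ?case .
    qed
  qed
  finally show "A \<in> null_sets (PG 1 0)"
    by (simp add: null_sets_def)
qed

lemma nn_integral_PG_density:
  assumes [measurable]: "f \<in> borel_measurable borel"
  shows "(\<integral>\<^sup>+x. f x \<partial>PG 1 0) = (\<integral>\<^sup>+x. PG_density 1 0 x * f x \<partial>lborel)"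
  unfolding PG_density_def
  by (rule sigma_finite_measure.RN_deriv_nn_integral[OF sigma_finite_lborel absolutely_continuous_PG_1_0]) auto

lemma borel_measurable_PG_density[measurable]: "PG_density 1 0 \<in> borel_measurable borel"
  using borel_measurable_RN_deriv[of lborel "PG 1 0"] unfolding PG_density_def by simp

section \<open>Poisson processes\<close>

lemma nn_integral_poisson_pmf_power:
  fixes a r :: real
  assumes a: "0 < a" and r: "0 \<le> r"
  shows "(\<integral>\<^sup>+n. ennreal r ^ n \<partial>measure_pmf (poisson_pmf a)) = ennreal (exp (a * (r - 1)))"
proof -
  have "(\<lambda>n. (a * r) ^ n / fact n) sums exp (a * r)"
    using exp_converges[of "a * r"] by (simp add: divide_inverse ac_simps scaleR_conv_of_real)
  then have sums: "(\<lambda>n. exp (- a) * ((a * r) ^ n / fact n)) sums (exp (- a) * exp (a * r))"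
    by (rule sums_mult)
  have "(\<integral>\<^sup>+n. ennreal r ^ n \<partial>measure_pmf (poisson_pmf a))
      = (\<Sum>n. ennreal (pmf (poisson_pmf a) n) * ennreal r ^ n)"
    by (simp add: nn_integral_measure_pmf nn_integral_count_space_nat)
  also have "\<dots> = (\<Sum>n. ennreal (exp (- a) * ((a * r) ^ n / fact n)))"
    using a r by (intro suminf_cong) (simp add: ennreal_power ennreal_mult'[symmetric] power_mult_distrib)
  also have "\<dots> = ennreal (exp (- a) * exp (a * r))"
    using a r sums by (subst suminf_ennreal2) (auto simp: sums_iff)
  also have "exp (- a) * exp (a * r) = exp (a * (r - 1))"
    by (simp add: exp_add[symmetric] algebra_simps)
  finally show ?thesis .
qed

lemma prob_space_scale_measure_total:
  assumes "emeasure \<mu> (space \<mu>) = ennreal M" and "0 < M"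
  shows "prob_space (scale_measure (inverse (emeasure \<mu> (space \<mu>))) \<mu>)"
proof
  show "emeasure (scale_measure (inverse (emeasure \<mu> (space \<mu>))) \<mu>)
      (space (scale_measure (inverse (emeasure \<mu> (space \<mu>))) \<mu>)) = 1"
    using assms by (simp add: space_scale_measure inverse_ennreal ennreal_mult[symmetric])
qed

lemma prob_space_poisson_process:
  assumes "emeasure \<mu> (space \<mu>) = ennreal M" and "0 < M"
  shows "prob_space (poisson_process \<mu>)"
  unfolding poisson_process_def
  by (intro prob_space_pair prob_space_PiM prob_space_scale_measure_total[OF assms] prob_space_measure_pmf)

lemma borel_measurable_poisson_process_prod:
  fixes H :: "'a \<Rightarrow> ennreal"
  assumes [measurable]: "H \<in> borel_measurable \<mu>"
  shows "(\<lambda>\<Psi>. \<Prod>j<fst \<Psi>. H (snd \<Psi> j)) \<in> borel_measurable (poisson_process \<mu>)"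
  unfolding poisson_process_def
proof (rule measurable_compose_countable[where f = "\<lambda>n \<Psi>. \<Prod>j<n. H (snd \<Psi> j)" and g = fst])
  show "fst \<in> measurable (measure_pmf (poisson_pmf (measure \<mu> (space \<mu>))) \<Otimes>\<^sub>M
      PiM UNIV (\<lambda>_. scale_measure (inverse (emeasure \<mu> (space \<mu>))) \<mu>)) (count_space UNIV)"
    by (rule measurable_fst'') simp
qed measurable

text \<open>Conditionally on \<open>n\<close> points, the product has mean
  \<open>(\<integral>H d\<mu> / \<mu>(S))\<^sup>n\<close>, and the generating function of the Poisson count does the rest.\<close>

lemma nn_integral_poisson_process_prod:
  fixes \<mu> :: "'a measure" and H :: "'a \<Rightarrow> ennreal" and M I :: real
  assumes M: "emeasure \<mu> (space \<mu>) = ennreal M" "0 < M"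
    and [measurable]: "H \<in> borel_measurable \<mu>"
    and I: "(\<integral>\<^sup>+x. H x \<partial>\<mu>) = ennreal I" "0 \<le> I"
  shows "(\<integral>\<^sup>+\<Psi>. (\<Prod>j<fst \<Psi>. H (snd \<Psi> j)) \<partial>poisson_process \<mu>) = ennreal (exp (I - M))"
proof -
  define \<nu> where "\<nu> = scale_measure (inverse (emeasure \<mu> (space \<mu>))) \<mu>"
  have \<nu>: "prob_space \<nu>"
    unfolding \<nu>_def by (rule prob_space_scale_measure_total[OF M])
  interpret PM: prob_space "PiM UNIV (\<lambda>_::nat. \<nu>)"
    by (intro prob_space_PiM \<nu>)
  have [measurable]: "H \<in> borel_measurable \<nu>" unfolding \<nu>_def by simp
  have "(\<integral>\<^sup>+x. H x \<partial>\<nu>) = ennreal (1/M) * ennreal I"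
    unfolding \<nu>_def using M I by (simp add: nn_integral_scale_measure inverse_ennreal inverse_eq_divide)
  also have "\<dots> = ennreal (I / M)" using M I by (simp add: ennreal_mult[symmetric])
  finally have int_\<nu>: "(\<integral>\<^sup>+x. H x \<partial>\<nu>) = ennreal (I / M)" .
  have "measure \<mu> (space \<mu>) = M" using M by (simp add: measure_def)
  then have pp: "poisson_process \<mu> = measure_pmf (poisson_pmf M) \<Otimes>\<^sub>M PiM UNIV (\<lambda>_::nat. \<nu>)"
    unfolding poisson_process_def \<nu>_def by simp
  have "(\<lambda>\<Psi>. \<Prod>j<fst \<Psi>. H (snd \<Psi> j)) \<in> borel_measurable (measure_pmf (poisson_pmf M) \<Otimes>\<^sub>M PiM UNIV (\<lambda>_::nat. \<nu>))"
    using borel_measurable_poisson_process_prod[of H \<mu>] unfolding pp by simp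
  then have "(\<integral>\<^sup>+\<Psi>. (\<Prod>j<fst \<Psi>. H (snd \<Psi> j)) \<partial>poisson_process \<mu>)
      = (\<integral>\<^sup>+n. (\<integral>\<^sup>+pts. (\<Prod>j<n. H (pts j)) \<partial>PiM UNIV (\<lambda>_::nat. \<nu>)) \<partial>measure_pmf (poisson_pmf M))"
    unfolding pp by (subst PM.nn_integral_fst[symmetric]) auto
  also have "\<dots> = (\<integral>\<^sup>+n. ennreal (I / M) ^ n \<partial>measure_pmf (poisson_pmf M))"
    by (subst nn_integral_PiM_prod_lessThan[OF \<nu>]) (auto simp: int_\<nu>)
  also have "\<dots> = ennreal (exp (M * (I / M - 1)))"
    using M I by (intro nn_integral_poisson_pmf_power) auto
  also have "M * (I / M - 1) = I - M"
    using M by (simp add: field_simps)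
  finally show ?thesis .
qed

lemma nn_integral_pair_measure_times:
  assumes "sigma_finite_measure N"
    and [measurable]: "f \<in> borel_measurable M" "h \<in> borel_measurable N"
  shows "(\<integral>\<^sup>+p. f (fst p) * h (snd p) \<partial>(M \<Otimes>\<^sub>M N)) = (\<integral>\<^sup>+a. f a \<partial>M) * (\<integral>\<^sup>+b. h b \<partial>N)"
proof -
  interpret N: sigma_finite_measure N by fact
  have "(\<integral>\<^sup>+p. f (fst p) * h (snd p) \<partial>(M \<Otimes>\<^sub>M N)) = (\<integral>\<^sup>+a. (\<integral>\<^sup>+b. f a * h b \<partial>N) \<partial>M)"
    by (subst N.nn_integral_fst[symmetric]) auto
  also have "\<dots> = (\<integral>\<^sup>+a. f a * (\<integral>\<^sup>+b. h b \<partial>N) \<partial>M)"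
    by (intro nn_integral_cong nn_integral_cmult) auto
  also have "\<dots> = (\<integral>\<^sup>+a. f a \<partial>M) * (\<integral>\<^sup>+b. h b \<partial>N)"
    by (rule nn_integral_multc) auto
  finally show ?thesis .
qed

section \<open>The standard Gaussian density\<close>

lemma std_gauss_density_Basis:
  "std_gauss_density (\<theta> :: real^'m::finite) = (\<Prod>b\<in>Basis. std_normal_density (\<theta> \<bullet> b))"
proof -
  have Basis_eq: "(Basis :: (real^'m) set) = (\<lambda>i. axis i 1) ` UNIV"
    unfolding Basis_vec_def by auto
  have "inj (\<lambda>i::'m. axis i (1::real))"
    by (auto intro!: injI simp: axis_eq_axis)
  then show ?thesis
    unfolding std_gauss_density_def Basis_eq by (subst prod.reindex) (simp_all add: inner_axis)
qed

lemma borel_measurable_std_gauss_density[measurable]: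
  "(std_gauss_density :: real^'m::finite \<Rightarrow> real) \<in> borel_measurable borel"
  unfolding std_gauss_density_Basis[abs_def] by measurable

lemma std_gauss_density_nonneg: "0 \<le> std_gauss_density \<theta>"
  unfolding std_gauss_density_def by (intro prod_nonneg) auto

lemma nn_integral_std_normal_density: "(\<integral>\<^sup>+x. ennreal (std_normal_density x) \<partial>lborel) = 1"
proof -
  interpret prob_space "density lborel (normal_density 0 1)"
    by (rule prob_space_normal_density) simp
  show ?thesis
    using emeasure_space_1 by (simp add: emeasure_density)
qed

lemma nn_integral_std_gauss_density:
  "(\<integral>\<^sup>+\<theta>. ennreal (std_gauss_density (\<theta> :: real^'m::finite)) \<partial>lborel) = 1"
proof -
  have "(\<integral>\<^sup>+\<theta>. ennreal (std_gauss_density (\<theta> :: real^'m)) \<partial>lborel)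
      = (\<integral>\<^sup>+\<theta>. (\<Prod>b\<in>Basis. ennreal (std_normal_density ((\<theta> :: real^'m) \<bullet> b))) \<partial>lborel)"
    by (intro nn_integral_cong) (simp add: std_gauss_density_Basis prod_ennreal)
  also have "\<dots> = (\<Prod>b\<in>(Basis :: (real^'m) set). (\<integral>\<^sup>+x. ennreal (std_normal_density x) \<partial>lborel))"
    by (rule nn_integral_lborel_prod) auto
  finally show ?thesis by (simp add: nn_integral_std_normal_density)
qed

lemma integrable_std_gauss_density: "integrable lborel (std_gauss_density :: real^'m::finite \<Rightarrow> real)"
  by (rule integrableI_nonneg) (auto simp: std_gauss_density_nonneg nn_integral_std_gauss_density)

lemma integral_std_gauss_density: "(\<integral>\<theta>. std_gauss_density (\<theta> :: real^'m::finite) \<partial>lborel) = 1"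
  using nn_integral_eq_integral[OF integrable_std_gauss_density AE_I2[OF std_gauss_density_nonneg]]
  by (simp add: nn_integral_std_gauss_density)

lemma std_gauss_density_ge_on_cube:
  assumes "\<theta> \<in> cbox (vec (-1)) (vec 1)"
  shows "std_normal_density 1 ^ CARD('m) \<le> std_gauss_density (\<theta> :: real^'m::finite)"
proof -
  have "std_normal_density 1 \<le> std_normal_density (\<theta> $ k)" for k
  proof -
    have "\<bar>\<theta> $ k\<bar> \<le> 1" using assms by (auto simp: mem_box_cart abs_le_iff)
    then have "(\<theta> $ k)^2 \<le> 1" by (simp add: abs_square_le_1)
    then show ?thesis by (simp add: std_normal_density_def divide_right_mono)
  qed
  then have "(\<Prod>k\<in>(UNIV::'m set). std_normal_density 1) \<le> (\<Prod>k\<in>UNIV. std_normal_density (\<theta> $ k))"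
    by (intro prod_mono) simp
  then show ?thesis unfolding std_gauss_density_def by simp
qed

lemma integrable_sigmoid_std_gauss:
  fixes h :: "real^'m::finite \<Rightarrow> real"
  assumes [measurable]: "h \<in> borel_measurable borel"
  shows "integrable lborel (\<lambda>\<theta>. sigmoid (h \<theta>) * std_gauss_density \<theta>)"
  by (rule Bochner_Integration.integrable_bound[OF integrable_std_gauss_density])
     (auto simp: abs_mult std_gauss_density_nonneg sigmoid_pos less_imp_le
           intro!: mult_left_le_one_le sigmoid_le_1)

lemma integral_sigmoid_std_gauss_le_1:
  fixes h :: "real^'m::finite \<Rightarrow> real"
  assumes [measurable]: "h \<in> borel_measurable borel"
  shows "(\<integral>\<theta>. sigmoid (h \<theta>) * std_gauss_density \<theta> \<partial>lborel) \<le> 1"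
proof -
  have "(\<integral>\<theta>. sigmoid (h \<theta>) * std_gauss_density \<theta> \<partial>lborel) \<le> (\<integral>\<theta>. std_gauss_density (\<theta> :: real^'m) \<partial>lborel)"
    by (intro integral_mono integrable_sigmoid_std_gauss integrable_std_gauss_density)
       (auto simp: std_gauss_density_nonneg intro!: mult_left_le_one_le sigmoid_le_1 less_imp_le[OF sigmoid_pos])
  then show ?thesis by (simp add: integral_std_gauss_density)
qed

lemma integral_sigmoid_std_gauss_lower:
  fixes h :: "real^'m::finite \<Rightarrow> real"
  assumes [measurable]: "h \<in> borel_measurable borel"
    and B: "\<And>\<theta>. \<theta> \<in> cbox (vec (-1)) (vec 1) \<Longrightarrow> \<bar>h \<theta>\<bar> \<le> B"
  shows "sigmoid (- B) * std_normal_density 1 ^ CARD('m) * 2 ^ CARD('m)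
    \<le> (\<integral>\<theta>. sigmoid (h \<theta>) * std_gauss_density \<theta> \<partial>lborel)"
proof -
  define K :: "(real^'m) set" where "K = cbox (vec (-1)) (vec 1)"
  define d where "d = std_normal_density 1 ^ CARD('m)"
  have d: "0 < d" unfolding d_def by (simp add: normal_density_pos)
  have "measure lborel K = (\<Prod>i\<in>(UNIV::'m set). (2::real))"
  proof -
    have "(0::real^'m) \<in> K" by (simp add: K_def mem_box_cart)
    then show ?thesis unfolding K_def by (subst content_cbox_cart) auto
  qed
  then have "sigmoid (- B) * d * 2 ^ CARD('m) = (\<integral>\<theta>. indicator K \<theta> * (sigmoid (- B) * d) \<partial>lborel)"
    by simp
  also have "\<dots> \<le> (\<integral>\<theta>. sigmoid (h \<theta>) * std_gauss_density \<theta> \<partial>lborel)"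
  proof (intro integral_mono integrable_sigmoid_std_gauss integrable_mult_left integrable_real_indicator)
    fix \<theta> :: "real^'m"
    show "indicator K \<theta> * (sigmoid (- B) * d) \<le> sigmoid (h \<theta>) * std_gauss_density \<theta>"
    proof (cases "\<theta> \<in> K")
      case True
      then have "sigmoid (- B) \<le> sigmoid (h \<theta>)" and "d \<le> std_gauss_density \<theta>"
        using B[of \<theta>] std_gauss_density_ge_on_cube[of \<theta>] by (auto simp: K_def d_def intro!: sigmoid_mono)
      then show ?thesis using True d
        by (simp add: mult_mono less_imp_le[OF sigmoid_pos])
    qed (simp add: std_gauss_density_nonneg less_imp_le[OF sigmoid_pos])
  qed (auto simp: K_def emeasure_lborel_cbox_eq)
  finally show ?thesis unfolding d_def .
qed

section \<open>The normalising function and the hazard\<close>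

text \<open>The network is only assumed continuous for \<open>t \<in> [0,y]\<close>; freezing time outside
  \<open>[0,y]\<close> gives a continuous, hence Borel measurable, extension to all \<open>t\<close>.\<close>

definition clamp_time :: "(real \<Rightarrow> 'p \<Rightarrow> 'q \<Rightarrow> real) \<Rightarrow> 'p \<Rightarrow> real \<Rightarrow> real \<Rightarrow> 'q \<Rightarrow> real" where
  "clamp_time g x y t \<theta> = g (max 0 (min y t)) x \<theta>"

lemma clamp_time_eq: "t \<in> {0..y} \<Longrightarrow> clamp_time g x y t \<theta> = g t x \<theta>"
  unfolding clamp_time_def by simp

definition Z_clamped :: "(real \<Rightarrow> 'p \<Rightarrow> real^'m::finite \<Rightarrow> real) \<Rightarrow> 'p \<Rightarrow> real \<Rightarrow> real \<Rightarrow> real" where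
  "Z_clamped g x y t = (\<integral>\<theta>. sigmoid (clamp_time g x y t \<theta>) * std_gauss_density \<theta> \<partial>lborel)"

lemma Zfun_eq_Z_clamped: "t \<in> {0..y} \<Longrightarrow> Zfun g t x = Z_clamped g x y t"
  unfolding Zfun_def Z_clamped_def by (simp add: clamp_time_eq)

lemma cov_hazard_nonneg:
  assumes "0 \<le> \<phi>"
  shows "0 \<le> cov_hazard g \<rho> t x \<phi>"
  unfolding cov_hazard_def base_hazard_def Zfun_def using assms
  by (intro divide_nonneg_nonneg mult_nonneg_nonneg integral_nonneg_AE AE_I2)
     (auto simp: std_gauss_density_nonneg less_imp_le[OF sigmoid_pos])

lemma set_integral_cov_hazard_mult_nonneg:
  assumes "0 \<le> \<phi>" and "\<And>t. 0 \<le> b t"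
  shows "0 \<le> (LINT t:A|lborel. cov_hazard g \<rho> t x \<phi> * b t)"
  unfolding set_lebesgue_integral_def using assms
  by (intro integral_nonneg_AE AE_I2) (auto simp: cov_hazard_nonneg indicator_def)

lemma nn_integral_powr_atLeastAtMost:
  assumes "0 < y" and "0 < \<rho>"
  shows "(\<integral>\<^sup>+t. ennreal (t powr (\<rho> - 1)) * indicator {0..y} t \<partial>lborel) = ennreal (y powr \<rho> / \<rho>)"
proof -
  have "((\<lambda>t. t powr (\<rho> - 1)) has_integral (y powr (\<rho> - 1 + 1) / (\<rho> - 1 + 1))) {0..y}"
    using assms by (intro has_integral_powr_from_0) auto
  then show ?thesis by (subst nn_integral_has_integral_lebesgue') auto
qed

lemma density_cong_space:
  assumes "\<And>x. x \<in> space M \<Longrightarrow> f x = f' x"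
  shows "density M f = density M f'"
  unfolding density_def
  by (intro arg_cong[where f="measure_of (space M) (sets M)"] ext nn_integral_cong) (simp add: assms)

lemma borel_measurable_marked_intensity:
  "H \<in> borel_measurable borel \<Longrightarrow> H \<in> borel_measurable (marked_intensity g \<rho> y x \<phi>)"
  unfolding marked_intensity_def by (simp, intro measurable_restrict_space1) simp

lemma space_marked_intensity: "space (marked_intensity g \<rho> y x \<phi>) = {0..y} \<times> {0..}"
  unfolding marked_intensity_def by (simp add: space_restrict_space)

definition hazard_clamped ::
  "(real \<Rightarrow> 'p \<Rightarrow> real^'m::finite \<Rightarrow> real) \<Rightarrow> 'p \<Rightarrow> real \<Rightarrow> real \<Rightarrow> real \<Rightarrow> real \<Rightarrow> real" where
  "hazard_clamped g x y \<rho> \<phi> t = base_hazard \<rho> t \<phi> / Z_clamped g x y t"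

definition pg_mark_weight :: "(real \<Rightarrow> 'p \<Rightarrow> 'q \<Rightarrow> real) \<Rightarrow> 'p \<Rightarrow> real \<Rightarrow> 'q \<Rightarrow> real \<times> real \<Rightarrow> ennreal" where
  "pg_mark_weight g x y \<theta> p = ennreal (exp (fPG (snd p) (- clamp_time g x y (fst p) \<theta>)))"

context
  fixes g :: "real \<Rightarrow> real^'p::finite \<Rightarrow> real^'m::finite \<Rightarrow> real" and x :: "real^'p" and y :: real
  assumes y: "0 < y" and cont: "continuous_on ({0..y} \<times> UNIV) (\<lambda>(t, \<theta>'). g t x \<theta>')"
begin

lemma continuous_on_clamp_time: "continuous_on UNIV (\<lambda>p. clamp_time g x y (fst p) (snd p))"
proof -
  have "continuous_on UNIV (\<lambda>p. (\<lambda>(t, \<theta>'). g t x \<theta>') ((\<lambda>p. (max 0 (min y (fst p)), snd p)) p))"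
    by (rule continuous_on_compose2[OF cont]) (use y in \<open>auto intro!: continuous_intros\<close>)
  then show ?thesis by (simp add: clamp_time_def split_beta)
qed

lemma continuous_on_clamp_time_at:
  "continuous_on UNIV (\<lambda>q. clamp_time g x y (t q) (\<theta> q))" if "continuous_on UNIV (\<lambda>q. (t q, \<theta> q))"
  using continuous_on_compose2[OF continuous_on_clamp_time that] by simp

lemma borel_measurable_clamp_time_time[measurable]: "(\<lambda>t. clamp_time g x y t \<theta>) \<in> borel_measurable borel"
  by (intro borel_measurable_continuous_onI continuous_on_clamp_time_at continuous_intros)

lemma borel_measurable_clamp_time_param[measurable]: "clamp_time g x y t \<in> borel_measurable borel"
  using continuous_on_clamp_time_at[of "\<lambda>_. t" "\<lambda>\<theta>. \<theta>"] continuous_on_Pair[OF continuous_on_const continuous_on_id]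
  by (auto intro: borel_measurable_continuous_onI)

lemma borel_measurable_Z_clamped[measurable]: "Z_clamped g x y \<in> borel_measurable borel"
proof -
  have "sets (borel \<Otimes>\<^sub>M (lborel :: (real^'m) measure)) = sets (borel :: (real \<times> (real^'m)) measure)"
    by (simp add: borel_prod[symmetric] cong: sets_pair_measure_cong)
  then have [measurable]: "(\<lambda>p. clamp_time g x y (fst p) (snd p)) \<in> borel_measurable (borel \<Otimes>\<^sub>M lborel)"
    using borel_measurable_continuous_onI[OF continuous_on_clamp_time] by (simp cong: measurable_cong_sets)
  show ?thesis
    unfolding Z_clamped_def[abs_def] by (intro lborel.borel_measurable_lebesgue_integral) measurable
qed

lemma Z_clamped_le_1: "Z_clamped g x y t \<le> 1"
  unfolding Z_clamped_def by (rule integral_sigmoid_std_gauss_le_1) measurable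

lemma Z_clamped_lower: "\<exists>c>0. \<forall>t. c \<le> Z_clamped g x y t"
proof -
  define K :: "(real^'m) set" where "K = cbox (vec (-1)) (vec 1)"
  have "compact ((\<lambda>p. clamp_time g x y (fst p) (snd p)) ` ({0..y} \<times> K))"
    by (rule compact_continuous_image[OF continuous_on_subset[OF continuous_on_clamp_time]])
       (auto simp: K_def intro: compact_Times)
  then obtain B where B: "\<forall>z\<in>(\<lambda>p. clamp_time g x y (fst p) (snd p)) ` ({0..y} \<times> K). \<bar>z\<bar> \<le> B"
    by (auto dest!: compact_imp_bounded simp: bounded_real)
  have "\<bar>clamp_time g x y t \<theta>\<bar> \<le> B" if "\<theta> \<in> K" for t \<theta>
    using B that y bspec[OF B, of "clamp_time g x y (max 0 (min y t)) \<theta>"]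
    by (force simp: clamp_time_def)
  then have "sigmoid (- B) * std_normal_density 1 ^ CARD('m) * 2 ^ CARD('m) \<le> Z_clamped g x y t" for t
    unfolding Z_clamped_def K_def by (intro integral_sigmoid_std_gauss_lower) auto
  moreover have "0 < sigmoid (- B) * std_normal_density 1 ^ CARD('m) * 2 ^ CARD('m)"
    by (simp add: sigmoid_pos normal_density_pos)
  ultimately show ?thesis by blast
qed

lemma Z_clamped_pos: "0 < Z_clamped g x y t"
  using Z_clamped_lower by (auto intro: less_le_trans)

lemma borel_measurable_pg_mark_weight[measurable]:
  "pg_mark_weight g x y \<theta> \<in> borel_measurable (borel :: (real \<times> real) measure)"
proof -
  have "continuous_on UNIV (\<lambda>p::real \<times> real. clamp_time g x y (fst p) \<theta>)"
    by (intro continuous_on_clamp_time_at continuous_intros)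
  then have "continuous_on UNIV (\<lambda>p::real \<times> real. exp (fPG (snd p) (- clamp_time g x y (fst p) \<theta>)))"
    unfolding fPG_def by (intro continuous_intros) auto
  then have [measurable]: "(\<lambda>p::real \<times> real. exp (fPG (snd p) (- clamp_time g x y (fst p) \<theta>))) \<in> borel_measurable borel"
    by (rule borel_measurable_continuous_onI)
  show ?thesis unfolding pg_mark_weight_def[abs_def] by measurable
qed

context
  fixes \<rho> \<phi> :: real
  assumes \<rho>: "0 < \<rho>" and \<phi>: "0 < \<phi>"
begin

lemma cov_hazard_eq_hazard_clamped: "t \<in> {0..y} \<Longrightarrow> cov_hazard g \<rho> t x \<phi> = hazard_clamped g x y \<rho> \<phi> t"
  unfolding cov_hazard_def hazard_clamped_def by (simp add: Zfun_eq_Z_clamped)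

lemma borel_measurable_hazard_clamped[measurable]: "hazard_clamped g x y \<rho> \<phi> \<in> borel_measurable borel"
  unfolding hazard_clamped_def[abs_def] base_hazard_def
  using borel_measurable_Z_clamped by measurable

lemma hazard_clamped_nonneg: "0 \<le> hazard_clamped g x y \<rho> \<phi> t"
  unfolding hazard_clamped_def base_hazard_def
  using Z_clamped_pos \<phi> by (auto intro!: divide_nonneg_pos)

lemma hazard_clamped_lower: "\<phi> * t powr (\<rho> - 1) \<le> hazard_clamped g x y \<rho> \<phi> t"
proof -
  have "\<phi> * t powr (\<rho> - 1) / 1 \<le> \<phi> * t powr (\<rho> - 1) / Z_clamped g x y t"
    using Z_clamped_pos Z_clamped_le_1 \<phi> by (intro divide_left_mono) auto
  then show ?thesis unfolding hazard_clamped_def base_hazard_def by simp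
qed

lemma hazard_clamped_upper: "\<exists>C>0. \<forall>t. hazard_clamped g x y \<rho> \<phi> t \<le> C * t powr (\<rho> - 1)"
proof -
  obtain c where c: "c > 0" "\<And>t. c \<le> Z_clamped g x y t"
    using Z_clamped_lower by blast
  have "hazard_clamped g x y \<rho> \<phi> t \<le> \<phi> / c * t powr (\<rho> - 1)" for t
  proof -
    have "\<phi> * t powr (\<rho> - 1) / Z_clamped g x y t \<le> \<phi> * t powr (\<rho> - 1) / c"
      using c \<phi> by (intro divide_left_mono) (auto intro: mult_pos_pos less_le_trans)
    then show ?thesis unfolding hazard_clamped_def base_hazard_def by simp
  qed
  with c \<phi> show ?thesis by (intro exI[of _ "\<phi> / c"]) auto
qed

lemma integrable_hazard_clamped: "integrable lborel (\<lambda>t. indicator {0..y} t * hazard_clamped g x y \<rho> \<phi> t)"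
proof (rule integrableI_bounded)
  obtain C where C: "C > 0" "\<And>t. hazard_clamped g x y \<rho> \<phi> t \<le> C * t powr (\<rho> - 1)"
    using hazard_clamped_upper by blast
  have "(\<integral>\<^sup>+t. ennreal (norm (indicator {0..y} t * hazard_clamped g x y \<rho> \<phi> t)) \<partial>lborel)
     \<le> (\<integral>\<^sup>+t. ennreal C * (ennreal (t powr (\<rho> - 1)) * indicator {0..y} t) \<partial>lborel)"
    using C hazard_clamped_nonneg
    by (intro nn_integral_mono) (auto simp: ennreal_mult[symmetric] indicator_def intro!: ennreal_leI)
  also have "\<dots> = ennreal C * ennreal (y powr \<rho> / \<rho>)"
    using y \<rho> by (subst nn_integral_cmult) (auto simp: nn_integral_powr_atLeastAtMost)
  finally show "(\<integral>\<^sup>+t. ennreal (norm (indicator {0..y} t * hazard_clamped g x y \<rho> \<phi> t)) \<partial>lborel) < \<infinity>"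
    by (simp add: ennreal_mult_less_top order.strict_trans1)
qed measurable

lemma integrable_hazard_clamped_mult:
  assumes [measurable]: "b \<in> borel_measurable borel" and "\<And>t. \<bar>b t\<bar> \<le> 1"
  shows "integrable lborel (\<lambda>t. indicator {0..y} t * hazard_clamped g x y \<rho> \<phi> t * b t)"
proof (rule Bochner_Integration.integrable_bound[OF integrable_hazard_clamped])
  show "AE t in lborel. norm (indicator {0..y} t * hazard_clamped g x y \<rho> \<phi> t * b t)
      \<le> norm (indicator {0..y} t * hazard_clamped g x y \<rho> \<phi> t)"
    using assms(2) hazard_clamped_nonneg
    by (intro AE_I2) (auto simp: abs_mult indicator_def intro!: mult_left_le)
qed measurable

lemma set_integral_cov_hazard_mult:
  assumes "\<And>t. t \<in> {0..y} \<Longrightarrow> b t = b' t"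
  shows "(LINT t:{0..y}|lborel. cov_hazard g \<rho> t x \<phi> * b t)
    = (\<integral>t. indicator {0..y} t * hazard_clamped g x y \<rho> \<phi> t * b' t \<partial>lborel)"
  unfolding set_lebesgue_integral_def using assms
  by (intro Bochner_Integration.integral_cong refl) (auto simp: indicator_def cov_hazard_eq_hazard_clamped)

lemma set_integrable_cov_hazard_mult:
  assumes [measurable]: "b' \<in> borel_measurable borel" and "\<And>t. \<bar>b' t\<bar> \<le> 1"
    and "\<And>t. t \<in> {0..y} \<Longrightarrow> b t = b' t"
  shows "set_integrable lborel {0..y} (\<lambda>t. cov_hazard g \<rho> t x \<phi> * b t)"
  unfolding set_integrable_def
  using integrable_hazard_clamped_mult[OF assms(1,2)]
  by (rule Bochner_Integration.integrable_cong[THEN iffD1, rotated 2])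
     (auto simp: indicator_def assms(3) cov_hazard_eq_hazard_clamped)

lemma nn_integral_hazard_clamped_mult:
  assumes [measurable]: "b' \<in> borel_measurable borel" and "\<And>t. 0 \<le> b' t" "\<And>t. b' t \<le> 1"
    and "\<And>t. t \<in> {0..y} \<Longrightarrow> b t = b' t"
  shows "(\<integral>\<^sup>+t. ennreal (hazard_clamped g x y \<rho> \<phi> t) * indicator {0..y} t * ennreal (b' t) \<partial>lborel)
    = ennreal (LINT t:{0..y}|lborel. cov_hazard g \<rho> t x \<phi> * b t)"
proof -
  have set_integral_eq: "(LINT t:{0..y}|lborel. cov_hazard g \<rho> t x \<phi> * b t)
      = (\<integral>t. indicator {0..y} t * hazard_clamped g x y \<rho> \<phi> t * b' t \<partial>lborel)"
    using assms(4) by (rule set_integral_cov_hazard_mult)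
  have "(\<integral>\<^sup>+t. ennreal (hazard_clamped g x y \<rho> \<phi> t) * indicator {0..y} t * ennreal (b' t) \<partial>lborel)
      = (\<integral>\<^sup>+t. ennreal (indicator {0..y} t * hazard_clamped g x y \<rho> \<phi> t * b' t) \<partial>lborel)"
    using assms(2) hazard_clamped_nonneg
    by (intro nn_integral_cong) (auto simp: indicator_def ennreal_mult)
  also have "\<dots> = ennreal (\<integral>t. indicator {0..y} t * hazard_clamped g x y \<rho> \<phi> t * b' t \<partial>lborel)"
    using assms(2,3) hazard_clamped_nonneg
    by (intro nn_integral_eq_integral integrable_hazard_clamped_mult AE_I2) auto
  finally show ?thesis
    unfolding set_integral_eq .
qed

lemma set_integral_cov_hazard_pos: "0 < (LINT t:{0..y}|lborel. cov_hazard g \<rho> t x \<phi>)"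
proof -
  have "ennreal (\<phi> * (y powr \<rho> / \<rho>)) = ennreal \<phi> * ennreal (y powr \<rho> / \<rho>)"
    using \<phi> \<rho> by (intro ennreal_mult) auto
  also have "\<dots> = ennreal \<phi> * (\<integral>\<^sup>+t. ennreal (t powr (\<rho> - 1)) * indicator {0..y} t \<partial>lborel)"
    by (simp only: nn_integral_powr_atLeastAtMost[OF y \<rho>])
  also have "\<dots> = (\<integral>\<^sup>+t. ennreal (\<phi> * t powr (\<rho> - 1)) * indicator {0..y} t \<partial>lborel)"
    using \<phi> by (subst nn_integral_cmult[symmetric]) (auto intro!: nn_integral_cong simp: ennreal_mult mult.assoc)
  also have "\<dots> \<le> (\<integral>\<^sup>+t. ennreal (hazard_clamped g x y \<rho> \<phi> t) * indicator {0..y} t \<partial>lborel)"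
    by (intro nn_integral_mono mult_right_mono ennreal_leI hazard_clamped_lower) auto
  also have "\<dots> = ennreal (LINT t:{0..y}|lborel. cov_hazard g \<rho> t x \<phi> * 1)"
    using nn_integral_hazard_clamped_mult[of "\<lambda>_. 1" "\<lambda>_. 1"] by simp
  finally have "\<phi> * (y powr \<rho> / \<rho>) \<le> (LINT t:{0..y}|lborel. cov_hazard g \<rho> t x \<phi>)"
    using \<phi> set_integral_cov_hazard_mult_nonneg[of \<phi> "\<lambda>_. 1"] by (subst (asm) ennreal_le_iff) auto
  moreover have "0 < \<phi> * (y powr \<rho> / \<rho>)" using y \<rho> \<phi> by simp
  ultimately show ?thesis by linarith
qed

section \<open>The marked Poisson process\<close>

lemma marked_intensity_eq_density:
  "marked_intensity g \<rho> y x \<phi> = density (restrict_space lborel ({0..y} \<times> {0..}))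
     (\<lambda>p. ennreal (hazard_clamped g x y \<rho> \<phi> (fst p)) * PG_density 1 0 (snd p))"
  unfolding marked_intensity_def
  by (intro density_cong_space) (auto simp: space_restrict_space cov_hazard_eq_hazard_clamped)

lemma nn_integral_marked_intensity:
  assumes [measurable]: "H \<in> borel_measurable (borel :: (real \<times> real) measure)"
  shows "(\<integral>\<^sup>+p. H p \<partial>marked_intensity g \<rho> y x \<phi>)
    = (\<integral>\<^sup>+t. ennreal (hazard_clamped g x y \<rho> \<phi> t) * indicator {0..y} t * (\<integral>\<^sup>+\<omega>. H (t, \<omega>) \<partial>PG 1 0) \<partial>lborel)"
proof -
  define \<Omega> :: "(real \<times> real) set" where "\<Omega> = {0..y} \<times> {0..}"
  define f where "f p = ennreal (hazard_clamped g x y \<rho> \<phi> (fst p)) * PG_density 1 0 (snd p)" for p :: "real \<times> real"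
  have [measurable]: "\<Omega> \<in> sets (borel :: (real \<times> real) measure)"
    unfolding \<Omega>_def by (intro borel_closed closed_Times) auto
  then have [measurable]: "\<Omega> \<in> sets (lborel \<Otimes>\<^sub>M lborel)"
    by (simp only: lborel_prod sets_lborel)
  have f_pair[measurable]: "f \<in> borel_measurable (lborel \<Otimes>\<^sub>M lborel)"
    unfolding f_def by measurable
  then have [measurable]: "f \<in> borel_measurable borel"
    by (simp add: lborel_prod)
  have [measurable]: "H \<in> borel_measurable (lborel \<Otimes>\<^sub>M lborel)"
    by (simp add: lborel_prod)
  have "(\<integral>\<^sup>+p. H p \<partial>marked_intensity g \<rho> y x \<phi>) = (\<integral>\<^sup>+p. f p * H p \<partial>restrict_space lborel \<Omega>)"
    unfolding marked_intensity_eq_density f_def[symmetric] \<Omega>_def[symmetric]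
    by (intro nn_integral_density measurable_restrict_space1) auto
  also have "\<dots> = (\<integral>\<^sup>+p. f p * H p * indicator \<Omega> p \<partial>(lborel \<Otimes>\<^sub>M lborel))"
    by (subst nn_integral_restrict_space) (auto simp: lborel_prod)
  also have "\<dots> = (\<integral>\<^sup>+t. (\<integral>\<^sup>+\<omega>. f (t, \<omega>) * H (t, \<omega>) * indicator \<Omega> (t, \<omega>) \<partial>lborel) \<partial>lborel)"
    by (subst lborel.nn_integral_fst[symmetric]) auto
  also have "\<dots> = (\<integral>\<^sup>+t. ennreal (hazard_clamped g x y \<rho> \<phi> t) * indicator {0..y} t * (\<integral>\<^sup>+\<omega>. H (t, \<omega>) \<partial>PG 1 0) \<partial>lborel)"
  proof (intro nn_integral_cong)
    fix t :: real
    have "(\<integral>\<^sup>+\<omega>. f (t, \<omega>) * H (t, \<omega>) * indicator \<Omega> (t, \<omega>) \<partial>lborel)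
        = (\<integral>\<^sup>+\<omega>. (ennreal (hazard_clamped g x y \<rho> \<phi> t) * indicator {0..y} t) * (PG_density 1 0 \<omega> * (indicator {0..} \<omega> * H (t, \<omega>))) \<partial>lborel)"
      by (intro nn_integral_cong) (auto simp: f_def \<Omega>_def indicator_def ac_simps)
    also have "\<dots> = (ennreal (hazard_clamped g x y \<rho> \<phi> t) * indicator {0..y} t) * (\<integral>\<^sup>+\<omega>. indicator {0..} \<omega> * H (t, \<omega>) \<partial>PG 1 0)"
      by (subst nn_integral_PG_density) (auto intro: nn_integral_cmult)
    also have "(\<integral>\<^sup>+\<omega>. indicator {0..} \<omega> * H (t, \<omega>) \<partial>PG 1 0) = (\<integral>\<^sup>+\<omega>. H (t, \<omega>) \<partial>PG 1 0)"
      by (intro nn_integral_cong_AE) (use AE_PG_1_0_nonneg in \<open>auto elim!: eventually_mono\<close>)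
    finally show "(\<integral>\<^sup>+\<omega>. f (t, \<omega>) * H (t, \<omega>) * indicator \<Omega> (t, \<omega>) \<partial>lborel)
        = ennreal (hazard_clamped g x y \<rho> \<phi> t) * indicator {0..y} t * (\<integral>\<^sup>+\<omega>. H (t, \<omega>) \<partial>PG 1 0)" .
  qed
  finally show ?thesis .
qed

lemma emeasure_marked_intensity_space:
  "emeasure (marked_intensity g \<rho> y x \<phi>) (space (marked_intensity g \<rho> y x \<phi>))
    = ennreal (LINT t:{0..y}|lborel. cov_hazard g \<rho> t x \<phi>)"
proof -
  interpret PG: prob_space "PG 1 0" by (rule prob_space_PG_1_0)
  have "emeasure (marked_intensity g \<rho> y x \<phi>) (space (marked_intensity g \<rho> y x \<phi>))
      = (\<integral>\<^sup>+p. 1 \<partial>marked_intensity g \<rho> y x \<phi>)" by simp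
  also have "\<dots> = (\<integral>\<^sup>+t. ennreal (hazard_clamped g x y \<rho> \<phi> t) * indicator {0..y} t * ennreal 1 \<partial>lborel)"
    using PG.emeasure_space_1 by (subst nn_integral_marked_intensity) auto
  also have "\<dots> = ennreal (LINT t:{0..y}|lborel. cov_hazard g \<rho> t x \<phi> * 1)"
    by (rule nn_integral_hazard_clamped_mult) auto
  finally show ?thesis by simp
qed

lemma nn_integral_marked_intensity_pg_mark_weight:
  "(\<integral>\<^sup>+p. pg_mark_weight g x y \<theta> p \<partial>marked_intensity g \<rho> y x \<phi>)
    = ennreal (LINT t:{0..y}|lborel. cov_hazard g \<rho> t x \<phi> * sigmoid (- g t x \<theta>))"
proof -
  have "(\<integral>\<^sup>+p. pg_mark_weight g x y \<theta> p \<partial>marked_intensity g \<rho> y x \<phi>)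
      = (\<integral>\<^sup>+t. ennreal (hazard_clamped g x y \<rho> \<phi> t) * indicator {0..y} t
          * ennreal (sigmoid (- clamp_time g x y t \<theta>)) \<partial>lborel)"
    by (subst nn_integral_marked_intensity) (auto simp: pg_mark_weight_def nn_integral_PG_1_0_exp_fPG)
  also have "\<dots> = ennreal (LINT t:{0..y}|lborel. cov_hazard g \<rho> t x \<phi> * sigmoid (- g t x \<theta>))"
    by (rule nn_integral_hazard_clamped_mult)
       (auto simp: clamp_time_eq less_imp_le[OF sigmoid_pos] sigmoid_le_1)
  finally show ?thesis .
qed

lemma set_integral_cov_hazard_sigmoid_minus:
  "(LINT t:{0..y}|lborel. cov_hazard g \<rho> t x \<phi> * sigmoid (- g t x \<theta>))
    = (LINT t:{0..y}|lborel. cov_hazard g \<rho> t x \<phi>)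
      - (LINT t:{0..y}|lborel. cov_hazard g \<rho> t x \<phi> * sigmoid (g t x \<theta>))"
proof -
  have "set_integrable lborel {0..y} (\<lambda>t. cov_hazard g \<rho> t x \<phi> * 1)"
    by (rule set_integrable_cov_hazard_mult[of "\<lambda>_. 1"]) auto
  moreover have "set_integrable lborel {0..y} (\<lambda>t. cov_hazard g \<rho> t x \<phi> * sigmoid (g t x \<theta>))"
    by (rule set_integrable_cov_hazard_mult[of "\<lambda>t. sigmoid (clamp_time g x y t \<theta>)"])
       (auto simp: clamp_time_eq abs_of_pos sigmoid_pos sigmoid_le_1)
  ultimately have "(LINT t:{0..y}|lborel. cov_hazard g \<rho> t x \<phi> * 1 - cov_hazard g \<rho> t x \<phi> * sigmoid (g t x \<theta>))
      = (LINT t:{0..y}|lborel. cov_hazard g \<rho> t x \<phi> * 1)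
        - (LINT t:{0..y}|lborel. cov_hazard g \<rho> t x \<phi> * sigmoid (g t x \<theta>))"
    by (rule set_integral_diff(2))
  then show ?thesis
    by (simp add: sigmoid_minus right_diff_distrib)
qed

lemma prod_mark_weights_eq:
  assumes "\<Psi> \<in> space (poisson_process (marked_intensity g \<rho> y x \<phi>))"
  shows "ennreal (\<Prod>j<fst \<Psi>. exp (fPG (snd (snd \<Psi> j)) (- g (fst (snd \<Psi> j)) x \<theta>)))
    = (\<Prod>j<fst \<Psi>. pg_mark_weight g x y \<theta> (snd \<Psi> j))"
proof -
  have "snd \<Psi> j \<in> {0..y} \<times> {0..}" for j
    using assms by (auto simp: poisson_process_def space_pair_measure space_PiM space_scale_measure
        space_marked_intensity PiE_iff)
  then show ?thesis
    by (auto simp: pg_mark_weight_def prod_ennreal clamp_time_eq mem_Times_iff intro!: prod.cong)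
qed

lemma borel_measurable_prod_mark_weights:
  "(\<lambda>\<Psi>. ennreal (\<Prod>j<fst \<Psi>. exp (fPG (snd (snd \<Psi> j)) (- g (fst (snd \<Psi> j)) x \<theta>))))
    \<in> borel_measurable (poisson_process (marked_intensity g \<rho> y x \<phi>))"
  using borel_measurable_poisson_process_prod[OF borel_measurable_marked_intensity[OF borel_measurable_pg_mark_weight]]
  by (subst measurable_cong[OF prod_mark_weights_eq])

lemma nn_integral_poisson_process_mark_weights:
  "(\<integral>\<^sup>+\<Psi>. ennreal (\<Prod>j<fst \<Psi>. exp (fPG (snd (snd \<Psi> j)) (- g (fst (snd \<Psi> j)) x \<theta>)))
      \<partial>poisson_process (marked_intensity g \<rho> y x \<phi>))
    = ennreal (exp (- (LINT t:{0..y}|lborel. cov_hazard g \<rho> t x \<phi> * sigmoid (g t x \<theta>))))"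
proof -
  have "(\<integral>\<^sup>+\<Psi>. ennreal (\<Prod>j<fst \<Psi>. exp (fPG (snd (snd \<Psi> j)) (- g (fst (snd \<Psi> j)) x \<theta>)))
      \<partial>poisson_process (marked_intensity g \<rho> y x \<phi>))
      = (\<integral>\<^sup>+\<Psi>. (\<Prod>j<fst \<Psi>. pg_mark_weight g x y \<theta> (snd \<Psi> j)) \<partial>poisson_process (marked_intensity g \<rho> y x \<phi>))"
    by (intro nn_integral_cong prod_mark_weights_eq)
  also have "\<dots> = ennreal (exp ((LINT t:{0..y}|lborel. cov_hazard g \<rho> t x \<phi> * sigmoid (- g t x \<theta>))
      - (LINT t:{0..y}|lborel. cov_hazard g \<rho> t x \<phi>)))"
    using \<phi> set_integral_cov_hazard_mult_nonneg[of \<phi> "\<lambda>t. sigmoid (- g t x \<theta>)"]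
    by (intro nn_integral_poisson_process_prod emeasure_marked_intensity_space set_integral_cov_hazard_pos
          nn_integral_marked_intensity_pg_mark_weight borel_measurable_marked_intensity
          borel_measurable_pg_mark_weight) (auto simp: less_imp_le[OF sigmoid_pos])
  finally show ?thesis
    by (simp add: set_integral_cov_hazard_sigmoid_minus)
qed

end

end

theorem theorem1:
  fixes N :: nat and ys :: "nat \<Rightarrow> real" and \<delta>s :: "nat \<Rightarrow> nat"
    and xs :: "nat \<Rightarrow> real ^ 'p::finite"
    and g :: "real \<Rightarrow> real ^ 'p \<Rightarrow> real ^ 'm::finite \<Rightarrow> real"
    and \<rho> \<phi> :: real and \<theta> :: "real ^ 'm" and i :: nat
  assumes ys_pos: "\<And>k. k \<in> {1..N} \<Longrightarrow> ys k > 0"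
    and \<delta>s_bin: "\<And>k. k \<in> {1..N} \<Longrightarrow> \<delta>s k \<in> {0, 1}"
    and \<rho>_pos: "\<rho> > 0"
    and i: "i \<in> {1..N}"
    and \<phi>_pos: "\<phi> > 0"
    and cont: "continuous_on ({0..ys i} \<times> UNIV) (\<lambda>(t, \<theta>'). g t (xs i) \<theta>')"
  shows "ennreal (likelihood g \<rho> (ys i) (\<delta>s i) (xs i) \<phi> \<theta>) =
    (\<integral>\<^sup>+ (\<omega>, \<Psi>). ennreal (aug_likelihood g \<rho> (ys i) (\<delta>s i) (xs i) \<phi> \<theta> \<omega> \<Psi>)
        \<partial>(PG 1 0 \<Otimes>\<^sub>M poisson_process (marked_intensity g \<rho> (ys i) (xs i) \<phi>)))"
proof -
  have y: "0 < ys i" and \<delta>: "\<delta>s i \<in> {0, 1}" using ys_pos \<delta>s_bin i by auto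
  let ?\<Psi> = "poisson_process (marked_intensity g \<rho> (ys i) (xs i) \<phi>)"
  let ?weights = "\<lambda>\<Psi>. \<Prod>j<fst \<Psi>. exp (fPG (snd (snd \<Psi> j)) (- g (fst (snd \<Psi> j)) (xs i) \<theta>))"
  define l where "l = cov_hazard g \<rho> (ys i) (xs i) \<phi>"
  define z where "z = g (ys i) (xs i) \<theta>"
  have l: "0 \<le> l" unfolding l_def using \<phi>_pos by (intro cov_hazard_nonneg) simp
  note setting = y cont \<rho>_pos \<phi>_pos
  have "sigma_finite_measure ?\<Psi>"
    using prob_space_poisson_process[OF emeasure_marked_intensity_space[where g=g and x="xs i", OF setting]
        set_integral_cov_hazard_pos[where g=g and x="xs i", OF setting]]
    by (rule prob_space_imp_sigma_finite)
  then have "(\<integral>\<^sup>+ (\<omega>, \<Psi>). ennreal (aug_likelihood g \<rho> (ys i) (\<delta>s i) (xs i) \<phi> \<theta> \<omega> \<Psi>) \<partial>(PG 1 0 \<Otimes>\<^sub>M ?\<Psi>))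
      = (\<integral>\<^sup>+\<omega>. ennreal ((l * exp (fPG \<omega> z)) ^ \<delta>s i) \<partial>PG 1 0) * (\<integral>\<^sup>+\<Psi>. ennreal (?weights \<Psi>) \<partial>?\<Psi>)"
    using l by (subst nn_integral_pair_measure_times[symmetric])
      (auto intro!: nn_integral_cong borel_measurable_prod_mark_weights[where g=g and x="xs i", OF setting]
        simp: aug_likelihood_def l_def z_def split_beta ennreal_mult')
  also have "\<dots> = ennreal ((l * sigmoid z) ^ \<delta>s i)
      * ennreal (exp (- (LINT t:{0..ys i}|lborel. cov_hazard g \<rho> t (xs i) \<phi> * sigmoid (g t (xs i) \<theta>))))"
    using l \<delta> by (simp add: nn_integral_PG_1_0_event_factor
        nn_integral_poisson_process_mark_weights[where g=g and x="xs i", OF setting])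
  also have "\<dots> = ennreal (likelihood g \<rho> (ys i) (\<delta>s i) (xs i) \<phi> \<theta>)"
    using l by (simp add: likelihood_def l_def z_def ennreal_mult less_imp_le[OF sigmoid_pos])
  finally show ?thesis by simp
qed

end
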